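(* Let $n\in\mathbb{Z}\setminus\{0\}$, $c,d\in\mathbb{N}$, and $f:\mathbb{Z}\to\mathbb{C}$, and set $$\mathcal{T}_n(c,d)=\sum_{\substack{a,b\in\mathbb{Z}\setminus\{0\}\\ ad-bc=n}} f(bc),$$ the sum being zero if there are no such $a,b$. If $\gcd(c,d)\nmid n$ then $\mathcal{T}_n(c,d)=0$. If $\gcd(c,d)\mid n$ (and the series converge absolutely), then $$\mathcal{T}_n(c,d)=\sum_{m\in\mathbb{Z}} f\big((m+u_{c,d})\,v_{c,d}\big)-\delta_{c\mid n}\,f(-n)-\delta_{d\mid n}\,f(0).$$
   Context: For $c,d\in\mathbb{N}$ with $\gcd(c,d)\mid n$: $B=\{b\in\mathbb{Z}:\exists a\in\mathbb{Z},\ ad-bc=n\}$, $b^*$ is an element of $B$ of minimal absolute value, $u_{c,d}=b^*\gcd(c,d)/d$, and $v_{c,d}=cd/\gcd(c,d)$. (The value of $u_{c,d}$ depends on the choice of $b^*$ only up to an integer, which does not affect the sum over $m\in\mathbb{Z}$.) $\delta_{c\mid n}$ equals $1$ if $c$ divides $n$ and $0$ otherwise; similarly $\delta_{d\mid n}$. *)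

theory Defs
  imports "HOL-Analysis.Analysis"
begin

definition T_set :: "int \<Rightarrow> nat \<Rightarrow> nat \<Rightarrow> (int \<times> int) set" where
  "T_set n c d = {(a, b). a \<noteq> 0 \<and> b \<noteq> 0 \<and> a * int d - b * int c = n}"

definition T_sum :: "int \<Rightarrow> nat \<Rightarrow> nat \<Rightarrow> (int \<Rightarrow> complex) \<Rightarrow> complex" where
  "T_sum n c d f = (\<Sum>\<^sub>\<infinity>(a, b) \<in> T_set n c d. f (b * int c))"

definition B_set :: "int \<Rightarrow> nat \<Rightarrow> nat \<Rightarrow> int set" where
  "B_set n c d = {b. \<exists>a::int. a * int d - b * int c = n}"

definition bstar :: "int \<Rightarrow> nat \<Rightarrow> nat \<Rightarrow> int" where
  "bstar n c d = (SOME b. b \<in> B_set n c d \<and> (\<forall>b'\<in>B_set n c d. \<bar>b\<bar> \<le> \<bar>b'\<bar>))"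

definition u_cd :: "int \<Rightarrow> nat \<Rightarrow> nat \<Rightarrow> rat" where
  "u_cd n c d = of_int (bstar n c d) * of_nat (gcd c d) / of_nat d"

definition v_cd :: "nat \<Rightarrow> nat \<Rightarrow> rat" where
  "v_cd c d = of_nat (c * d) / of_nat (gcd c d)"

end

theory Submission
  imports Defs
begin

text \<open>
  The map \<open>(a, b) \<mapsto> b\<close> identifies the index set of \<open>\<T>\<^sub>n(c,d)\<close> with the set \<open>B\<close>, minus
  the solutions with \<open>b = 0\<close> (present iff \<open>d \<mid> n\<close>) or \<open>a = 0\<close> (then \<open>b c = -n\<close>, present
  iff \<open>c \<mid> n\<close>). \<open>B\<close> is empty unless \<open>gcd(c,d) \<mid> n\<close>, and otherwise it is the arithmetic
  progression \<open>b\<^sup>* + (d / gcd(c,d)) \<int>\<close>, on which \<open>b c = (m + u\<^sub>c\<^sub>,\<^sub>d) v\<^sub>c\<^sub>,\<^sub>d\<close>.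
\<close>

lemma ex_min_abs_int:
  fixes A :: "int set"
  assumes "A \<noteq> {}"
  shows "\<exists>b\<in>A. \<forall>b'\<in>A. \<bar>b\<bar> \<le> \<bar>b'\<bar>"
proof -
  obtain b0 where "b0 \<in> A" using assms by blast
  then obtain b where "b \<in> A" "\<forall>b'. b' \<in> A \<longrightarrow> nat \<bar>b\<bar> \<le> nat \<bar>b'\<bar>"
    using ex_has_least_nat[of "\<lambda>b. b \<in> A" b0 "\<lambda>b. nat \<bar>b\<bar>"] by blast
  then show ?thesis by (auto simp: nat_le_eq_zle)
qed

lemma bstar_in_B_set:
  assumes "B_set n c d \<noteq> {}"
  shows "bstar n c d \<in> B_set n c d"
  unfolding bstar_def using someI_ex[OF ex_min_abs_int[OF assms, unfolded Bex_def]] by blast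

lemma B_set_nonempty_iff: "B_set n c d \<noteq> {} \<longleftrightarrow> int (gcd c d) dvd n"
proof
  assume "B_set n c d \<noteq> {}"
  then obtain a b where "a * int d - b * int c = n" unfolding B_set_def by blast
  moreover have "int (gcd c d) dvd a * int d - b * int c"
    by (intro dvd_diff dvd_mult) (simp_all add: int_dvd_int_iff)
  ultimately show "int (gcd c d) dvd n" by simp
next
  assume "int (gcd c d) dvd n"
  then obtain k where k: "n = int (gcd c d) * k" by blast
  obtain x y where xy: "x * int d + y * int c = int (gcd c d)"
    using bezout_int[of "int d" "int c"] by (auto simp: gcd.commute)
  have "(x * k) * int d - (- y * k) * int c = k * (x * int d + y * int c)"
    by (simp add: algebra_simps)
  then have "(x * k) * int d - (- y * k) * int c = n"
    using xy k by simp
  then show "B_set n c d \<noteq> {}" unfolding B_set_def by blast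
qed

lemma B_set_eq_range:
  assumes b0: "b0 \<in> B_set n c d" and nontriv: "c \<noteq> 0 \<or> d \<noteq> 0"
  shows "B_set n c d = range (\<lambda>m. b0 + int (d div gcd c d) * m)"
proof -
  define c' d' where "c' = int (c div gcd c d)" and "d' = int (d div gcd c d)"
  define G where "G = int (gcd c d)"
  have G: "G \<noteq> 0" using nontriv unfolding G_def by simp
  have c: "int c = G * c'" and d: "int d = G * d'"
    unfolding c'_def d'_def G_def by (simp_all flip: of_nat_mult)
  have coprime: "coprime c' d'"
    unfolding c'_def d'_def using div_gcd_coprime[of c d] nontriv by simp
  obtain a0 where a0: "a0 * int d - b0 * int c = n" using b0 unfolding B_set_def by blast
  show ?thesis unfolding d'_def[symmetric]
  proof (intro set_eqI iffI)
    fix b assume "b \<in> B_set n c d"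
    then obtain a where "a * int d - b * int c = n" unfolding B_set_def by blast
    with a0 have "G * ((a - a0) * d') = G * ((b - b0) * c')"
      by (simp add: c d algebra_simps)
    then have "(a - a0) * d' = (b - b0) * c'" using G by simp
    then have "d' dvd (b - b0) * c'" by (metis dvd_triv_right)
    then have "d' dvd b - b0"
      using coprime by (simp add: coprime_commute coprime_dvd_mult_left_iff)
    then obtain m where "b = b0 + d' * m" by (metis add.commute diff_add_cancel dvd_def)
    then show "b \<in> range (\<lambda>m. b0 + d' * m)" by blast
  next
    fix b assume "b \<in> range (\<lambda>m. b0 + d' * m)"
    then obtain m where "b = b0 + d' * m" by blast
    with a0 have "(a0 + c' * m) * int d - b * int c = n"
      by (simp add: c d algebra_simps)
    then show "b \<in> B_set n c d" unfolding B_set_def by blast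
  qed
qed

lemma lattice_point_u_cd_v_cd:
  assumes "d > 0"
  shows "(of_int m + u_cd n c d) * v_cd c d
           = of_int ((bstar n c d + int (d div gcd c d) * m) * int c)"
proof -
  have "(of_nat d :: rat) = of_nat (gcd c d) * of_nat (d div gcd c d)"
    by (simp flip: of_nat_mult)
  moreover have "gcd c d \<noteq> 0" "d div gcd c d \<noteq> 0"
    using assms by (auto simp: dvd_div_eq_0_iff)
  ultimately show ?thesis
    unfolding u_cd_def v_cd_def by (simp add: field_simps)
qed

lemma has_sum_B_set_iff_lattice:
  assumes "int (gcd c d) dvd n" and "d > 0"
  shows "((\<lambda>b. f (b * int c)) has_sum S) (B_set n c d)
           \<longleftrightarrow> ((\<lambda>m::int. f \<lfloor>(of_int m + u_cd n c d) * v_cd c d\<rfloor>) has_sum S) UNIV"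
proof -
  let ?step = "int (d div gcd c d)"
  let ?b = "\<lambda>m. bstar n c d + ?step * m"
  have "?step \<noteq> 0" using assms(2) by (simp add: dvd_div_eq_0_iff)
  then have "bij_betw ?b UNIV (B_set n c d)"
    using B_set_eq_range[OF bstar_in_B_set] assms
    by (simp add: bij_betw_def inj_def B_set_nonempty_iff)
  from has_sum_reindex_bij_betw[OF this, of "\<lambda>b. f (b * int c)" S, symmetric] show ?thesis
    by (simp only: lattice_point_u_cd_v_cd[OF assms(2)] floor_of_int)
qed

lemma bij_betw_snd_T_set:
  assumes "d > 0"
  shows "bij_betw snd (T_set n c d) {b \<in> B_set n c d. b \<noteq> 0 \<and> b * int c \<noteq> - n}"
proof (rule bij_betw_imageI)
  show "inj_on snd (T_set n c d)"
    using assms by (auto simp: inj_on_def T_set_def prod_eq_iff)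
  show "snd ` T_set n c d = {b \<in> B_set n c d. b \<noteq> 0 \<and> b * int c \<noteq> - n}"
  proof (intro set_eqI iffI)
    fix b assume "b \<in> snd ` T_set n c d"
    then obtain a where "a \<noteq> 0" "b \<noteq> 0" "a * int d - b * int c = n"
      unfolding T_set_def by auto
    with assms show "b \<in> {b \<in> B_set n c d. b \<noteq> 0 \<and> b * int c \<noteq> - n}"
      unfolding B_set_def by auto
  next
    fix b assume "b \<in> {b \<in> B_set n c d. b \<noteq> 0 \<and> b * int c \<noteq> - n}"
    then obtain a where "a * int d - b * int c = n" "b \<noteq> 0" "b * int c \<noteq> - n"
      unfolding B_set_def by auto
    then have "(a, b) \<in> T_set n c d" unfolding T_set_def by auto
    then show "b \<in> snd ` T_set n c d" by force
  qed
qed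

lemma B_set_degenerate_eq:
  assumes "c > 0"
  shows "{b \<in> B_set n c d. b = 0 \<or> b * int c = - n}
           = (if int c dvd n then {- (n div int c)} else {}) \<union> (if int d dvd n then {0} else {})"
proof -
  have zero: "{b \<in> B_set n c d. b = 0} = (if int d dvd n then {0} else {})"
    by (auto simp: B_set_def dvd_def mult.commute)
  have pole_iff: "b * int c = - n \<longleftrightarrow> int c dvd n \<and> b = - (n div int c)" for b
  proof
    assume "b * int c = - n"
    then have "n = int c * - b" by (simp add: mult.commute)
    moreover have "int c \<noteq> 0" using assms by simp
    ultimately show "int c dvd n \<and> b = - (n div int c)"
      by (metis dvd_triv_left nonzero_mult_div_cancel_left minus_minus)
  qed auto
  have "- (n div int c) \<in> B_set n c d" if "int c dvd n"
    using that unfolding B_set_def by (intro CollectI exI[of _ 0]) auto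
  then have pole: "{b \<in> B_set n c d. b * int c = - n}
                     = (if int c dvd n then {- (n div int c)} else {})"
    by (auto simp: pole_iff)
  have "{b \<in> B_set n c d. b = 0 \<or> b * int c = - n}
          = {b \<in> B_set n c d. b * int c = - n} \<union> {b \<in> B_set n c d. b = 0}"
    by blast
  then show ?thesis by (simp only: zero pole)
qed

lemma sum_B_set_degenerate:
  fixes f :: "int \<Rightarrow> 'a :: ring_1"
  assumes "n \<noteq> 0" and "c > 0"
  shows "(\<Sum>b \<in> {b \<in> B_set n c d. b = 0 \<or> b * int c = - n}. f (b * int c))
           = of_bool (int c dvd n) * f (- n) + of_bool (int d dvd n) * f 0"
proof -
  have "int c dvd n \<Longrightarrow> - (n div int c) \<noteq> 0" using assms by auto
  then show ?thesis
    by (cases "int c dvd n"; cases "int d dvd n")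
       (simp_all add: B_set_degenerate_eq[OF assms(2)])
qed

lemma has_sum_T_set:
  fixes f :: "int \<Rightarrow> 'a :: {ring_1, topological_ab_group_add}"
  assumes "n \<noteq> 0" and "c > 0" and "d > 0"
    and "((\<lambda>b. f (b * int c)) has_sum S) (B_set n c d)"
  shows "((\<lambda>(a, b). f (b * int c)) has_sum
           (S - of_bool (int c dvd n) * f (- n) - of_bool (int d dvd n) * f 0)) (T_set n c d)"
proof -
  let ?D = "{b \<in> B_set n c d. b = 0 \<or> b * int c = - n}"
  have "finite ?D"
    by (simp add: B_set_degenerate_eq[OF assms(2)])
  then have "((\<lambda>b. f (b * int c)) has_sum (S - (\<Sum>b \<in> ?D. f (b * int c)))) (B_set n c d - ?D)"
    by (intro has_sum_Diff[OF assms(4)] has_sum_finite) auto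
  then have "((\<lambda>b. f (b * int c)) has_sum
               (S - (of_bool (int c dvd n) * f (- n) + of_bool (int d dvd n) * f 0)))
             (B_set n c d - ?D)"
    by (simp only: sum_B_set_degenerate[OF assms(1,2)])
  moreover have "B_set n c d - ?D = {b \<in> B_set n c d. b \<noteq> 0 \<and> b * int c \<noteq> - n}"
    by blast
  ultimately show ?thesis
    by (simp only: case_prod_unfold diff_diff_eq
          has_sum_reindex_bij_betw[OF bij_betw_snd_T_set[OF assms(3)], of "\<lambda>b. f (b * int c)"])
qed

theorem lemma2p4:
  fixes n :: int and c d :: nat and f :: "int \<Rightarrow> complex"
  assumes "n \<noteq> 0" and "c > 0" and "d > 0"
  shows "(\<not> (int (gcd c d) dvd n) \<longrightarrow> T_sum n c d f = 0)
    \<and> ((int (gcd c d) dvd n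
         \<and> (\<lambda>(a, b). f (b * int c)) summable_on T_set n c d
         \<and> (\<lambda>m::int. f \<lfloor>(of_int m + u_cd n c d) * v_cd c d\<rfloor>) summable_on UNIV)
       \<longrightarrow> T_sum n c d f =
             (\<Sum>\<^sub>\<infinity>m::int. f \<lfloor>(of_int m + u_cd n c d) * v_cd c d\<rfloor>)
             - of_bool (int c dvd n) * f (- n) - of_bool (int d dvd n) * f 0)"
proof (intro conjI impI)
  assume "\<not> int (gcd c d) dvd n"
  then have "T_set n c d = {}"
    using bij_betw_snd_T_set[OF assms(3), of n c] B_set_nonempty_iff[of n c d]
    by (auto simp: bij_betw_def)
  then show "T_sum n c d f = 0" unfolding T_sum_def by simp
next
  let ?S = "\<Sum>\<^sub>\<infinity>m::int. f \<lfloor>(of_int m + u_cd n c d) * v_cd c d\<rfloor>"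
  assume hyps: "int (gcd c d) dvd n
         \<and> (\<lambda>(a, b). f (b * int c)) summable_on T_set n c d
         \<and> (\<lambda>m::int. f \<lfloor>(of_int m + u_cd n c d) * v_cd c d\<rfloor>) summable_on UNIV"
  then have "((\<lambda>m::int. f \<lfloor>(of_int m + u_cd n c d) * v_cd c d\<rfloor>) has_sum ?S) UNIV"
    by simp
  then have "((\<lambda>b. f (b * int c)) has_sum ?S) (B_set n c d)"
    using has_sum_B_set_iff_lattice[OF _ assms(3)] hyps by blast
  from has_sum_T_set[OF assms this] show "T_sum n c d f =
      ?S - of_bool (int c dvd n) * f (- n) - of_bool (int d dvd n) * f 0"
    unfolding T_sum_def by (rule infsumI)
qed

end
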